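(* Let $\mathbf{W}=\langle W;\to,\neg,{}^{+},{}^{-},1\rangle$ be a quasi-Wajsberg* algebra and let $\mu,\tau$ be the relations on $W$ given by: $\langle x,y\rangle\in\mu$ iff $x\le y$ and $y\le x$; $\langle x,y\rangle\in\tau$ iff $x=y$ or $x,y\in R(W)$. Then: (1) for any $x,y\in W$, $\langle x,y\rangle\in\mu$ iff $0\to x=0\to y$; (2) $\mu\cap\tau=\Delta$, the diagonal relation on $W$; (3) if $G(\mu\cup\tau)$ denotes the union of all finite relational products $\theta_1\circ\theta_2\circ\cdots\circ\theta_k$ ($k<\infty$) with each $\theta_i\in\{\mu,\tau\}$, then $G(\mu\cup\tau)=\nabla$, the all relation $W\times W$; (4) $\mu\circ\tau=\nabla$ iff $x/\mu\cap y/\tau\neq\varnothing$ for all $x,y\in W$.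
   Context: A quasi-Wajsberg* algebra is an algebra $\langle W;\to,\neg,{}^{+},{}^{-},1\rangle$ of type $\langle2,1,1,1,0\rangle$ such that for all $x,y,z\in W$: (QW*1) $x\to y=\neg y\to\neg x$; (QW*2) $(x\to 1)\to((y\to 1)\to z)=(y\to 1)\to((x\to 1)\to z)$; (QW*3) $(1\to x)\to 1=1$; (QW*4) $(z\to z)\to(x\to y)=x\to y$; (QW*5) $(1\to 1)\to x^{+}=((1\to 1)\to x)^{+}=(x\to 1)\to 1$ and $(1\to 1)\to x^{-}=((1\to 1)\to x)^{-}=(x\to\neg 1)\to\neg 1$; (QW*6) $x\to y=(y^{+}\to x^{-})\to(x^{+}\to y^{-})$; (QW*7) $\neg(x\to y)=y\to x$; (QW*8) $\neg\neg x=x$; (QW*9) $(x\to(\neg x\to y))^{+}=x^{+}\to(\neg x^{+}\to y^{+})$; (QW*10) $x\vee y=y\vee x$; (QW*11) $x\vee(y\vee z)=(x\vee y)\vee z$; (QW*12) $x\to(y\vee z)=(x\to y)\vee(x\to z)$; where $x\vee y:=((x^{+}\to y^{+})^{+}\to(\neg x)^{-})\to((y^{-}\to x^{-})^{-}\to x^{-})$. Conventions: ${}^+,{}^-$ bind tighter than $\neg$, which binds tighter than $\to$. Put $0:=1\to 1$, $x\le y$ iff $x\vee y=0\to y$, and $R(W):=\{x\in W:0\to x=x\}$. $x/\theta$ denotes the $\theta$-class of $x$, and $\circ$ is relational composition: $\langle x,y\rangle\in\mu\circ\tau$ iff there is $z$ with $\langle x,z\rangle\in\mu$ and $\langle z,y\rangle\in\tau$.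 *)

theory Defs
  imports Main
begin

text \<open>Quasi-Wajsberg* algebras. The universe of the algebra is the whole type 'a;
  the operations are: imp (\<rightarrow>), neg (\<not>), pl (^+), mi (^-), one (1).\<close>

definition qw_join :: "('a \<Rightarrow> 'a \<Rightarrow> 'a) \<Rightarrow> ('a \<Rightarrow> 'a) \<Rightarrow> ('a \<Rightarrow> 'a) \<Rightarrow> ('a \<Rightarrow> 'a) \<Rightarrow> 'a \<Rightarrow> 'a \<Rightarrow> 'a" where
  "qw_join imp neg pl mi x y =
     imp (imp (pl (imp (pl x) (pl y))) (mi (neg x)))
         (imp (mi (imp (mi y) (mi x))) (mi x))"

definition quasi_wajsberg ::
  "('a \<Rightarrow> 'a \<Rightarrow> 'a) \<Rightarrow> ('a \<Rightarrow> 'a) \<Rightarrow> ('a \<Rightarrow> 'a) \<Rightarrow> ('a \<Rightarrow> 'a) \<Rightarrow> 'a \<Rightarrow> bool" where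
  "quasi_wajsberg imp neg pl mi one \<longleftrightarrow>
     (\<forall>x y. imp x y = imp (neg y) (neg x)) \<and>
     (\<forall>x y z. imp (imp x one) (imp (imp y one) z) = imp (imp y one) (imp (imp x one) z)) \<and>
     (\<forall>x. imp (imp one x) one = one) \<and>
     (\<forall>x y z. imp (imp z z) (imp x y) = imp x y) \<and>
     (\<forall>x. imp (imp one one) (pl x) = pl (imp (imp one one) x) \<and>
          pl (imp (imp one one) x) = imp (imp x one) one) \<and>
     (\<forall>x. imp (imp one one) (mi x) = mi (imp (imp one one) x) \<and>
          mi (imp (imp one one) x) = imp (imp x (neg one)) (neg one)) \<and>
     (\<forall>x y. imp x y = imp (imp (pl y) (mi x)) (imp (pl x) (mi y))) \<and>
     (\<forall>x y. neg (imp x y) = imp y x) \<and>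
     (\<forall>x. neg (neg x) = x) \<and>
     (\<forall>x y. pl (imp x (imp (neg x) y)) = imp (pl x) (imp (neg (pl x)) (pl y))) \<and>
     (\<forall>x y. qw_join imp neg pl mi x y = qw_join imp neg pl mi y x) \<and>
     (\<forall>x y z. qw_join imp neg pl mi x (qw_join imp neg pl mi y z)
              = qw_join imp neg pl mi (qw_join imp neg pl mi x y) z) \<and>
     (\<forall>x y z. imp x (qw_join imp neg pl mi y z)
              = qw_join imp neg pl mi (imp x y) (imp x z))"

definition qw_zero :: "('a \<Rightarrow> 'a \<Rightarrow> 'a) \<Rightarrow> 'a \<Rightarrow> 'a" where
  "qw_zero imp one = imp one one"

definition qw_le :: "('a \<Rightarrow> 'a \<Rightarrow> 'a) \<Rightarrow> ('a \<Rightarrow> 'a) \<Rightarrow> ('a \<Rightarrow> 'a) \<Rightarrow> ('a \<Rightarrow> 'a) \<Rightarrow> 'a \<Rightarrow> 'a \<Rightarrow> 'a \<Rightarrow> bool" where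
  "qw_le imp neg pl mi one x y \<longleftrightarrow> qw_join imp neg pl mi x y = imp (qw_zero imp one) y"

definition qw_R :: "('a \<Rightarrow> 'a \<Rightarrow> 'a) \<Rightarrow> 'a \<Rightarrow> 'a set" where
  "qw_R imp one = {x. imp (qw_zero imp one) x = x}"

definition qw_mu :: "('a \<Rightarrow> 'a \<Rightarrow> 'a) \<Rightarrow> ('a \<Rightarrow> 'a) \<Rightarrow> ('a \<Rightarrow> 'a) \<Rightarrow> ('a \<Rightarrow> 'a) \<Rightarrow> 'a \<Rightarrow> 'a rel" where
  "qw_mu imp neg pl mi one =
     {(x, y). qw_le imp neg pl mi one x y \<and> qw_le imp neg pl mi one y x}"

definition qw_tau :: "('a \<Rightarrow> 'a \<Rightarrow> 'a) \<Rightarrow> 'a \<Rightarrow> 'a rel" where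
  "qw_tau imp one = {(x, y). x = y \<or> (x \<in> qw_R imp one \<and> y \<in> qw_R imp one)}"

definition rel_gen :: "'a rel \<Rightarrow> 'a rel \<Rightarrow> 'a rel" where
  "rel_gen \<mu> \<tau> = \<Union> {foldr (O) \<theta>s Id | \<theta>s. \<theta>s \<noteq> [] \<and> set \<theta>s \<subseteq> {\<mu>, \<tau>}}"

end

theory Submission
  imports Defs
begin

text \<open>Everything hinges on the identity \<open>x \<or> x = 0 \<rightarrow> x\<close>. Since \<open>0\<^sup>+ = 0\<^sup>- = 0\<close>,
  the definition of \<open>\<or>\<close> gives \<open>x \<or> x = (0 \<rightarrow> (\<not>x)\<^sup>-) \<rightarrow> (0 \<rightarrow> x\<^sup>-)\<close>, and (QW*6) applied
  to \<open>x \<rightarrow> 0\<close> shows that this is \<open>\<not>(x \<rightarrow> 0) = 0 \<rightarrow> x\<close>. Together with (QW*12) it follows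
  that \<open>x \<le> y\<close> and \<open>y \<le> x\<close> together amount to \<open>0 \<rightarrow> x = 0 \<rightarrow> y\<close>, so \<open>\<mu>\<close> is the kernel of
  \<open>x \<mapsto> 0 \<rightarrow> x\<close>, a retraction of \<open>W\<close> onto \<open>R(W)\<close>. Hence \<open>\<mu>\<close> meets \<open>\<tau>\<close> only in the
  diagonal, and the chain \<open>x \<mu> (0 \<rightarrow> x) \<tau> (0 \<rightarrow> y) \<mu> y\<close> shows \<open>\<mu> \<circ> \<tau> \<circ> \<mu> = \<nabla>\<close>.\<close>

lemma relcomp_subset_rel_gen:
  assumes "\<theta>s \<noteq> []" and "set \<theta>s \<subseteq> {\<mu>, \<tau>}"
  shows "foldr (O) \<theta>s Id \<subseteq> rel_gen \<mu> \<tau>"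
  using assms unfolding rel_gen_def by blast

lemma relcomp_eq_UNIV_iff_Image_meet:
  assumes "sym \<tau>"
  shows "\<mu> O \<tau> = UNIV \<longleftrightarrow> (\<forall>x y. \<mu> `` {x} \<inter> \<tau> `` {y} \<noteq> {})"
proof -
  have "(x, y) \<in> \<mu> O \<tau> \<longleftrightarrow> \<mu> `` {x} \<inter> \<tau> `` {y} \<noteq> {}" for x y
    using assms by (auto dest: symD)
  then show ?thesis by auto
qed

lemma sym_qw_tau: "sym (qw_tau imp one)"
  unfolding qw_tau_def by (auto intro: symI)

locale quasi_wajsberg_algebra =
  fixes imp :: "'a \<Rightarrow> 'a \<Rightarrow> 'a" (infixr "\<rightarrow>" 60)
    and neg pl mi :: "'a \<Rightarrow> 'a" and one :: 'a
  assumes qw_axioms: "quasi_wajsberg imp neg pl mi one"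
begin

abbreviation zero :: 'a where
  "zero \<equiv> qw_zero imp one"

abbreviation join :: "'a \<Rightarrow> 'a \<Rightarrow> 'a" (infixl "\<squnion>" 65) where
  "x \<squnion> y \<equiv> qw_join imp neg pl mi x y"

lemma one_imp_imp_one: "(one \<rightarrow> x) \<rightarrow> one = one"
  using qw_axioms unfolding quasi_wajsberg_def by meson

lemma imp_self_imp: "(z \<rightarrow> z) \<rightarrow> (x \<rightarrow> y) = x \<rightarrow> y"
  using qw_axioms unfolding quasi_wajsberg_def by meson

lemma zero_imp_pl: "zero \<rightarrow> pl x = pl (zero \<rightarrow> x)" "pl (zero \<rightarrow> x) = (x \<rightarrow> one) \<rightarrow> one"
  using qw_axioms unfolding quasi_wajsberg_def qw_zero_def by simp_all

lemma zero_imp_mi: "zero \<rightarrow> mi x = mi (zero \<rightarrow> x)" "mi (zero \<rightarrow> x) = (x \<rightarrow> neg one) \<rightarrow> neg one"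
  using qw_axioms unfolding quasi_wajsberg_def qw_zero_def by simp_all

lemma imp_pl_mi: "x \<rightarrow> y = (pl y \<rightarrow> mi x) \<rightarrow> (pl x \<rightarrow> mi y)"
  using qw_axioms unfolding quasi_wajsberg_def by meson

lemma neg_imp: "neg (x \<rightarrow> y) = y \<rightarrow> x"
  using qw_axioms unfolding quasi_wajsberg_def by meson

lemma neg_neg: "neg (neg x) = x"
  using qw_axioms unfolding quasi_wajsberg_def by meson

lemma contrapos: "x \<rightarrow> y = neg y \<rightarrow> neg x"
  using qw_axioms unfolding quasi_wajsberg_def by meson

lemma join_commute: "x \<squnion> y = y \<squnion> x"
  using qw_axioms unfolding quasi_wajsberg_def by meson

lemma imp_join_distrib: "x \<rightarrow> (y \<squnion> z) = (x \<rightarrow> y) \<squnion> (x \<rightarrow> z)"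
  using qw_axioms unfolding quasi_wajsberg_def by meson

lemma imp_self: "x \<rightarrow> x = zero"
proof -
  have "(a \<rightarrow> b) \<rightarrow> (z \<rightarrow> z) = b \<rightarrow> a" for a b z
    by (metis neg_imp imp_self_imp)
  then have "x \<rightarrow> x = (x \<rightarrow> x) \<rightarrow> (one \<rightarrow> one)" by simp
  also have "\<dots> = one \<rightarrow> one" by (rule imp_self_imp)
  finally show ?thesis unfolding qw_zero_def .
qed

lemma zero_imp_imp: "zero \<rightarrow> (x \<rightarrow> y) = x \<rightarrow> y"
  unfolding qw_zero_def by (rule imp_self_imp)

lemma pl_zero: "pl zero = zero"
proof -
  have "pl zero = pl (zero \<rightarrow> zero)" by (simp add: imp_self)
  also have "\<dots> = (zero \<rightarrow> one) \<rightarrow> one" by (rule zero_imp_pl(2))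
  also have "\<dots> = zero" unfolding qw_zero_def by (simp add: one_imp_imp_one)
  finally show ?thesis .
qed

lemma mi_zero: "mi zero = zero"
proof -
  have neg_one: "neg one = one \<rightarrow> zero"
    by (metis neg_imp one_imp_imp_one qw_zero_def)
  have "mi zero = mi (zero \<rightarrow> zero)" by (simp add: imp_self)
  also have "\<dots> = (zero \<rightarrow> neg one) \<rightarrow> neg one" by (rule zero_imp_mi(2))
  also have "\<dots> = zero" by (simp add: neg_one zero_imp_imp imp_self)
  finally show ?thesis .
qed

lemma join_self: "x \<squnion> x = zero \<rightarrow> x"
proof -
  have pl_imp_zero: "pl x \<rightarrow> zero = one \<rightarrow> (x \<rightarrow> one)"
    by (metis neg_imp zero_imp_pl)
  have zero_imp_mi_neg: "zero \<rightarrow> mi (neg x) = one \<rightarrow> (x \<rightarrow> one)"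
    by (metis contrapos neg_imp neg_neg zero_imp_mi)
  have "x \<squnion> x = (zero \<rightarrow> mi (neg x)) \<rightarrow> (zero \<rightarrow> mi x)"
    unfolding qw_join_def by (simp add: imp_self pl_zero mi_zero)
  also have "\<dots> = neg ((pl zero \<rightarrow> mi x) \<rightarrow> (pl x \<rightarrow> mi zero))"
    by (simp add: neg_imp pl_zero mi_zero pl_imp_zero zero_imp_mi_neg)
  also have "\<dots> = neg (x \<rightarrow> zero)" by (simp flip: imp_pl_mi)
  also have "\<dots> = zero \<rightarrow> x" by (rule neg_imp)
  finally show ?thesis .
qed

lemma zero_imp_join: "zero \<rightarrow> (x \<squnion> y) = x \<squnion> y"
  unfolding qw_join_def by (rule zero_imp_imp)

lemma zero_imp_join_zero_imp: "(zero \<rightarrow> x) \<squnion> (zero \<rightarrow> y) = x \<squnion> y"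
  by (simp flip: imp_join_distrib add: zero_imp_join)

lemma qw_le_iff: "qw_le imp neg pl mi one x y \<longleftrightarrow> x \<squnion> y = zero \<rightarrow> y"
  unfolding qw_le_def ..

lemma qw_mu_iff: "(x, y) \<in> qw_mu imp neg pl mi one \<longleftrightarrow> zero \<rightarrow> x = zero \<rightarrow> y"
proof
  assume "(x, y) \<in> qw_mu imp neg pl mi one"
  then have "x \<squnion> y = zero \<rightarrow> y" and "y \<squnion> x = zero \<rightarrow> x"
    unfolding qw_mu_def qw_le_iff by simp_all
  then show "zero \<rightarrow> x = zero \<rightarrow> y" by (simp add: join_commute)
next
  assume eq: "zero \<rightarrow> x = zero \<rightarrow> y"
  have "u \<squnion> v = zero \<rightarrow> v" if "zero \<rightarrow> u = zero \<rightarrow> v" for u v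
  proof -
    have "u \<squnion> v = (zero \<rightarrow> v) \<squnion> (zero \<rightarrow> v)" by (metis zero_imp_join_zero_imp that)
    also have "\<dots> = zero \<rightarrow> v" by (simp add: join_self zero_imp_imp)
    finally show ?thesis .
  qed
  then show "(x, y) \<in> qw_mu imp neg pl mi one"
    using eq unfolding qw_mu_def qw_le_iff by simp
qed

lemma qw_tau_iff:
  "(x, y) \<in> qw_tau imp one \<longleftrightarrow> x = y \<or> (zero \<rightarrow> x = x \<and> zero \<rightarrow> y = y)"
  unfolding qw_tau_def qw_R_def by simp

lemma qw_mu_inter_qw_tau: "qw_mu imp neg pl mi one \<inter> qw_tau imp one = Id"
  by (auto simp: qw_mu_iff qw_tau_iff)

lemma qw_mu_qw_tau_qw_mu: "qw_mu imp neg pl mi one O qw_tau imp one O qw_mu imp neg pl mi one = UNIV"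
proof -
  have "(x, y) \<in> qw_mu imp neg pl mi one O qw_tau imp one O qw_mu imp neg pl mi one" for x y
  proof -
    have "(x, zero \<rightarrow> x) \<in> qw_mu imp neg pl mi one"
      and "(zero \<rightarrow> x, zero \<rightarrow> y) \<in> qw_tau imp one"
      and "(zero \<rightarrow> y, y) \<in> qw_mu imp neg pl mi one"
      by (simp_all add: qw_mu_iff qw_tau_iff zero_imp_imp)
    then show ?thesis by blast
  qed
  then show ?thesis by auto
qed

end

theorem proposition4p2:
  fixes imp :: "'a \<Rightarrow> 'a \<Rightarrow> 'a" and neg pl mi :: "'a \<Rightarrow> 'a" and one :: 'a
  assumes "quasi_wajsberg imp neg pl mi one"
  defines "\<mu> \<equiv> qw_mu imp neg pl mi one" and "\<tau> \<equiv> qw_tau imp one"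
  shows "(\<forall>x y. (x, y) \<in> \<mu> \<longleftrightarrow> imp (qw_zero imp one) x = imp (qw_zero imp one) y)
         \<and> \<mu> \<inter> \<tau> = Id
         \<and> rel_gen \<mu> \<tau> = UNIV
         \<and> (\<mu> O \<tau> = UNIV \<longleftrightarrow> (\<forall>x y. \<mu> `` {x} \<inter> \<tau> `` {y} \<noteq> {}))"
proof -
  interpret quasi_wajsberg_algebra imp neg pl mi one by standard (rule assms(1))
  have "\<mu> O \<tau> O \<mu> \<subseteq> rel_gen \<mu> \<tau>"
    using relcomp_subset_rel_gen[of "[\<mu>, \<tau>, \<mu>]" \<mu> \<tau>] by simp
  then have "rel_gen \<mu> \<tau> = UNIV"
    using qw_mu_qw_tau_qw_mu unfolding \<mu>_def \<tau>_def by blast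
  moreover have "\<mu> O \<tau> = UNIV \<longleftrightarrow> (\<forall>x y. \<mu> `` {x} \<inter> \<tau> `` {y} \<noteq> {})"
    unfolding \<tau>_def by (rule relcomp_eq_UNIV_iff_Image_meet[OF sym_qw_tau])
  ultimately show ?thesis
    using qw_mu_iff qw_mu_inter_qw_tau unfolding \<mu>_def \<tau>_def by blast
qed

end
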